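(* Let $\Phi:M_n(\mathbb{C})\to M_n(\mathbb{C})$ be a completely positive map with Kraus operators $K_1,\ldots,K_d\in M_n(\mathbb{C})$, i.e. $\Phi(X)=\sum_{j\in[d]}K_jXK_j^*$, and suppose $\Phi$ is Hermitian, i.e. $\Phi=\Phi^*$ where $\Phi^*$ is the adjoint with respect to the Hilbert–Schmidt inner product ($\operatorname{tr}(X\Phi^*(Y))=\operatorname{tr}(\Phi(X)Y)$ for all $X,Y$). For $K\in M_n(\mathbb{C})$ put $K_R=(K+K^* )/2$ and $K_I=-i(K-K^* )/2$. Then the $2d$ Hermitian matrices $K_{1,R},K_{1,I},\ldots,K_{d,R},K_{d,I}$ are Kraus operators for $\Phi$, i.e. $\Phi(X)=\sum_{j\in[d]}\big(K_{j,R}XK_{j,R}+K_{j,I}XK_{j,I}\big)$ for all $X\in M_n(\mathbb{C})$. In particular every Hermitian completely positive map on $M_n(\mathbb{C})$ admits a Kraus representation with at most twice its Kraus rank many Hermitian Kraus operators.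
   Context: The Kraus rank of a completely positive map is the smallest $d$ for which a representation $\Phi(X)=\sum_{j\in[d]}K_jXK_j^*$ exists. *)

theory Defs
  imports "HOL-Analysis.Analysis"
begin

definition cadj :: "complex^'n^'n \<Rightarrow> complex^'n^'n" where
  "cadj A = (\<chi> i j. cnj (A $ j $ i))"

definition herm_part_R :: "complex^'n^'n \<Rightarrow> complex^'n^'n" where
  "herm_part_R K = (\<chi> i j. ((K + cadj K) $ i $ j) / 2)"

definition herm_part_I :: "complex^'n^'n \<Rightarrow> complex^'n^'n" where
  "herm_part_I K = (\<chi> i j. (- \<i>) * ((K - cadj K) $ i $ j) / 2)"

definition kraus_rep :: "(complex^'n^'n \<Rightarrow> complex^'n^'n) \<Rightarrow> nat \<Rightarrow> (nat \<Rightarrow> complex^'n^'n) \<Rightarrow> bool" where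
  "kraus_rep \<Phi> d K \<longleftrightarrow> (\<forall>X. \<Phi> X = (\<Sum>j<d. K j ** X ** cadj (K j)))"

definition completely_positive :: "(complex^'n^'n \<Rightarrow> complex^'n^'n) \<Rightarrow> bool" where
  "completely_positive \<Phi> \<longleftrightarrow> (\<exists>d K. kraus_rep \<Phi> d K)"

definition kraus_rank :: "(complex^'n^'n \<Rightarrow> complex^'n^'n) \<Rightarrow> nat" where
  "kraus_rank \<Phi> = (LEAST d. \<exists>K. kraus_rep \<Phi> d K)"

text \<open>Phi = Phi^*, the adjoint being defined by tr(X Phi^*(Y)) = tr(Phi(X) Y).\<close>
definition hermitian_map :: "(complex^'n^'n \<Rightarrow> complex^'n^'n) \<Rightarrow> bool" where
  "hermitian_map \<Phi> \<longleftrightarrow> (\<forall>X Y. trace (X ** \<Phi> Y) = trace (\<Phi> X ** Y))"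

end

theory Submission imports Defs begin

text \<open>
  By cyclicity of the trace, the Hilbert--Schmidt adjoint of \<open>X \<mapsto> \<Sum>j. K\<^sub>j X K\<^sub>j\<^sup>*\<close> is
  \<open>X \<mapsto> \<Sum>j. K\<^sub>j\<^sup>* X K\<^sub>j\<close>; since the trace pairing is nondegenerate, a Hermitian \<open>\<Phi>\<close> has
  both Kraus representations, hence also their average. Writing \<open>K = K\<^sub>R + i K\<^sub>I\<close>, the cross
  terms cancel in \<open>(K X K\<^sup>* + K\<^sup>* X K)/2 = K\<^sub>R X K\<^sub>R + K\<^sub>I X K\<^sub>I\<close>, which is the Hermitian
  Kraus representation.
\<close>

definition matrix_scale :: "'a::times \<Rightarrow> 'a^'n^'m \<Rightarrow> 'a^'n^'m" where
  "matrix_scale c A = (\<chi> i j. c * A $ i $ j)"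

lemma matrix_scale_mult_left:
  "matrix_scale c A ** B = matrix_scale c (A ** B :: 'a::comm_semiring_1^_^_)"
  by (simp add: matrix_scale_def matrix_matrix_mult_def vec_eq_iff sum_distrib_left mult.assoc)

lemma matrix_scale_mult_right:
  "A ** matrix_scale c B = matrix_scale c (A ** B :: 'a::comm_semiring_1^_^_)"
  by (simp add: matrix_scale_def matrix_matrix_mult_def vec_eq_iff sum_distrib_left ac_simps)

lemma matrix_scale_sum:
  "matrix_scale c (sum f S) = (\<Sum>j\<in>S. matrix_scale c (f j :: 'a::semiring_0^_^_))"
  by (simp add: matrix_scale_def vec_eq_iff sum_distrib_left)

lemma matrix_add_rdistrib: "((A :: 'a::semiring_1^_^_) + B) ** C = A ** C + B ** C"
  by (simp add: matrix_matrix_mult_def vec_eq_iff sum.distrib algebra_simps)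

lemma matrix_diff_ldistrib: "(C :: 'a::ring_1^_^_) ** (A - B) = C ** A - C ** B"
  by (simp add: matrix_matrix_mult_def vec_eq_iff sum_subtractf algebra_simps)

lemma matrix_diff_rdistrib: "((A :: 'a::ring_1^_^_) - B) ** C = A ** C - B ** C"
  by (simp add: matrix_matrix_mult_def vec_eq_iff sum_subtractf algebra_simps)

lemma matrix_sum_rdistrib: "sum f S ** (B :: 'a::semiring_1^_^_) = (\<Sum>j\<in>S. f j ** B)"
  by (induction S rule: infinite_finite_induct) (auto simp: matrix_add_rdistrib)

lemma matrix_sum_ldistrib: "(B :: 'a::semiring_1^_^_) ** sum f S = (\<Sum>j\<in>S. B ** f j)"
  by (induction S rule: infinite_finite_induct) (auto simp: matrix_add_ldistrib)

lemma trace_sum: "trace (sum f S :: 'a::comm_semiring_1^'n^'n) = (\<Sum>j\<in>S. trace (f j))"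
  by (induction S rule: infinite_finite_induct) (auto simp: trace_add trace_0[simplified])

lemma trace_sandwich_cyclic:
  "trace ((A ** X ** B) ** Y) = trace (X ** (B ** Y ** A :: 'a::comm_semiring_1^'n^'n))"
proof -
  have "trace ((A ** X ** B) ** Y) = trace (A ** (X ** B ** Y))"
    by (simp add: matrix_mul_assoc)
  also have "\<dots> = trace ((X ** B ** Y) ** A)" by (rule trace_mul_sym)
  finally show ?thesis by (simp add: matrix_mul_assoc)
qed

lemma matrix_eq_if_trace_mult_eq:
  assumes "\<And>X. trace (X ** A) = trace (X ** (B :: 'a::comm_ring_1^'n^'n))"
  shows "A = B"
proof -
  have "A $ a $ b = B $ a $ b" for a b
  proof -
    define E :: "'a^'n^'n" where "E = (\<chi> i j. if j = a then if i = b then 1 else 0 else 0)"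
    have "trace (E ** M) = M $ a $ b" for M
      by (simp add: E_def trace_def matrix_matrix_mult_def if_distrib[where f="\<lambda>x. x * _"]
            sum.delta cong: if_cong)
    then show ?thesis using assms[of E] by simp
  qed
  then show ?thesis by (simp add: vec_eq_iff)
qed

lemma cadj_cadj [simp]: "cadj (cadj A) = A"
  by (simp add: cadj_def vec_eq_iff)

lemma cadj_herm_part_R: "cadj (herm_part_R K) = herm_part_R K"
  by (simp add: herm_part_R_def cadj_def vec_eq_iff add.commute)

lemma cadj_herm_part_I: "cadj (herm_part_I K) = herm_part_I K"
  by (simp add: herm_part_I_def cadj_def vec_eq_iff algebra_simps)

lemma herm_part_R_eq: "herm_part_R K = matrix_scale (1/2) (K + cadj K)"
  by (simp add: herm_part_R_def matrix_scale_def vec_eq_iff)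

lemma herm_part_I_eq: "herm_part_I K = matrix_scale (-\<i>/2) (K - cadj K)"
  by (simp add: herm_part_I_def matrix_scale_def vec_eq_iff)

lemma herm_parts_sandwich:
  "herm_part_R K ** X ** herm_part_R K + herm_part_I K ** X ** herm_part_I K
     = matrix_scale (1/2) (K ** X ** cadj K + cadj K ** X ** K)"
  unfolding herm_part_R_eq herm_part_I_eq
  by (simp only: matrix_scale_mult_left matrix_scale_mult_right matrix_add_rdistrib
        matrix_diff_rdistrib matrix_diff_ldistrib matrix_add_ldistrib)
     (simp add: matrix_scale_def vec_eq_iff algebra_simps)

lemma hermitian_map_kraus_rep_cadj:
  assumes K: "kraus_rep \<Phi> d K" and herm: "hermitian_map \<Phi>"
  shows "kraus_rep \<Phi> d (\<lambda>j. cadj (K j))"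
  unfolding kraus_rep_def
proof
  fix Y
  have "trace (X ** \<Phi> Y) = trace (X ** (\<Sum>j<d. cadj (K j) ** Y ** K j))" for X
  proof -
    have "trace (X ** \<Phi> Y) = trace (\<Phi> X ** Y)"
      using herm by (simp add: hermitian_map_def)
    also have "\<dots> = (\<Sum>j<d. trace ((K j ** X ** cadj (K j)) ** Y))"
      using K by (simp add: kraus_rep_def matrix_sum_rdistrib trace_sum)
    also have "\<dots> = (\<Sum>j<d. trace (X ** (cadj (K j) ** Y ** K j)))"
      by (simp only: trace_sandwich_cyclic)
    finally show ?thesis by (simp add: matrix_sum_ldistrib trace_sum)
  qed
  then show "\<Phi> Y = (\<Sum>j<d. cadj (K j) ** Y ** cadj (cadj (K j)))"
    by (simp add: matrix_eq_if_trace_mult_eq)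
qed

lemma kraus_rep_herm_parts:
  assumes K: "kraus_rep \<Phi> d K" and herm: "hermitian_map \<Phi>"
  shows "\<Phi> X = (\<Sum>j<d. herm_part_R (K j) ** X ** herm_part_R (K j)
                     + herm_part_I (K j) ** X ** herm_part_I (K j))"
proof -
  have "(\<Sum>j<d. herm_part_R (K j) ** X ** herm_part_R (K j)
                 + herm_part_I (K j) ** X ** herm_part_I (K j))
        = matrix_scale (1/2) ((\<Sum>j<d. K j ** X ** cadj (K j)) + (\<Sum>j<d. cadj (K j) ** X ** K j))"
    by (simp add: herm_parts_sandwich matrix_scale_sum[symmetric] sum.distrib)
  also have "\<dots> = matrix_scale (1/2) (\<Phi> X + \<Phi> X)"
    using hermitian_map_kraus_rep_cadj[OF K herm] K by (simp add: kraus_rep_def)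
  also have "\<dots> = \<Phi> X"
    by (simp add: matrix_scale_def vec_eq_iff)
  finally show ?thesis by simp
qed

lemma sum_lessThan_double: "(\<Sum>j<2 * (d::nat). f j) = (\<Sum>j<d. f (2*j) + f (2*j + 1))"
  by (induction d) (simp_all add: ac_simps)

lemma kraus_rep_hermitian:
  assumes K: "kraus_rep \<Phi> d K" and herm: "hermitian_map \<Phi>"
  shows "kraus_rep \<Phi> (2*d)
           (\<lambda>j. if even j then herm_part_R (K (j div 2)) else herm_part_I (K (j div 2)))"
  using kraus_rep_herm_parts[OF K herm]
  by (simp add: kraus_rep_def sum_lessThan_double cadj_herm_part_R cadj_herm_part_I)

lemma kraus_rep_kraus_rank:
  assumes "completely_positive \<Phi>"
  shows "\<exists>K. kraus_rep \<Phi> (kraus_rank \<Phi>) K"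
  unfolding kraus_rank_def
  by (rule LeastI_ex) (use assms in \<open>simp add: completely_positive_def\<close>)

theorem mainTheorem6:
  "(\<forall>(\<Phi> :: complex^'n^'n \<Rightarrow> complex^'n^'n) d K.
      kraus_rep \<Phi> d K \<and> hermitian_map \<Phi> \<longrightarrow>
      (\<forall>j<d. cadj (herm_part_R (K j)) = herm_part_R (K j)
             \<and> cadj (herm_part_I (K j)) = herm_part_I (K j)) \<and>
      (\<forall>X. \<Phi> X = (\<Sum>j<d. herm_part_R (K j) ** X ** herm_part_R (K j)
                          + herm_part_I (K j) ** X ** herm_part_I (K j)))) \<and>
   (\<forall>(\<Phi> :: complex^'n^'n \<Rightarrow> complex^'n^'n).
      completely_positive \<Phi> \<and> hermitian_map \<Phi> \<longrightarrow>
      (\<exists>m H. m \<le> 2 * kraus_rank \<Phi> \<and> (\<forall>j<m. cadj (H j) = H j) \<and> kraus_rep \<Phi> m H))"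
proof (rule conjI; intro allI impI; elim conjE)
  fix \<Phi> :: "complex^'n^'n \<Rightarrow> complex^'n^'n" and d K
  assume "kraus_rep \<Phi> d K" "hermitian_map \<Phi>"
  then show "(\<forall>j<d. cadj (herm_part_R (K j)) = herm_part_R (K j)
                \<and> cadj (herm_part_I (K j)) = herm_part_I (K j)) \<and>
             (\<forall>X. \<Phi> X = (\<Sum>j<d. herm_part_R (K j) ** X ** herm_part_R (K j)
                                 + herm_part_I (K j) ** X ** herm_part_I (K j)))"
    by (simp add: cadj_herm_part_R cadj_herm_part_I kraus_rep_herm_parts)
next
  fix \<Phi> :: "complex^'n^'n \<Rightarrow> complex^'n^'n"
  assume "completely_positive \<Phi>" "hermitian_map \<Phi>"
  then obtain K where "kraus_rep \<Phi> (kraus_rank \<Phi>) K"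
    using kraus_rep_kraus_rank by blast
  then show "\<exists>m H. m \<le> 2 * kraus_rank \<Phi> \<and> (\<forall>j<m. cadj (H j) = H j) \<and> kraus_rep \<Phi> m H"
    using kraus_rep_hermitian[OF _ \<open>hermitian_map \<Phi>\<close>]
    by (intro exI[of _ "2 * kraus_rank \<Phi>"] exI conjI order_refl)
       (auto simp: cadj_herm_part_R cadj_herm_part_I)
qed

end
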